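(* Write the $\varepsilon$-expansions $$\Delta(x,\varepsilon)=\sum_{n\ge1}\Delta_n(x)\varepsilon^n,\qquad Y(x,\varepsilon)=\sum_{n\ge1}Y_n(x)\varepsilon^n.$$ Then for every $n\ge1$, both $\Delta_n(x)$ and $Y_n(x)$ are polynomials of degree $n$ in the quantities $f^{(l)}(x+k\mu)$, $0\le k\le q-1$, $0\le l\le n-1$. In particular $$\Delta_1(x)=-\overline f(x),\qquad Y_1(x)=-\frac{q+1}{2}\,\overline f(x)+\overline{\overline f}(x),$$ where $$\overline f(x)=\frac1q\sum_{k=0}^{q-1}f(x+k\mu),\qquad \overline{\overline f}(x)=\frac1q\sum_{k=0}^{q-1}(q-k)f(x+k\mu).$$
   Context: Fix integers $p$ and $q\ge1$ and put $\mu=2\pi p/q$. Let $f:\mathbb R\to\mathbb R$ be a $2\pi$-periodic real-analytic function. For real parameters $\varepsilon,\delta$ set $g(x)=-\delta-\varepsilon f(x)$ and consider the map $T_{\varepsilon,\delta}(x,y)=(x+y+\mu+g(x),\;y+g(x))$ on $\mathbb R^2$. Define ${}_nR$ and ${}_nS$ by $T^n_{\varepsilon,\delta}(x_0,y_0)=(x_0+n\mu+{}_nR,\;y_0+{}_nS)$. There exist $\bar{\bar\varepsilon},\eta>0$ and real-analytic functions $\Delta(x,\varepsilon)$ and $Y(x,\varepsilon)$, defined for $x\in\mathbb R$ and $|\varepsilon|<\bar{\bar\varepsilon}$ and vanishing at $\varepsilon=0$, such that $(\delta,y)=(\Delta(x,\varepsilon),Y(x,\varepsilon))$ is the unique solution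 with $|\delta|,|y|<\eta$ of ${}_qR(x,y,\varepsilon,\delta)={}_qS(x,y,\varepsilon,\delta)=0$. *)

theory Defs
  imports "HOL-Analysis.Analysis"
begin

definition real_analytic_on :: "(real \<Rightarrow> real) \<Rightarrow> real set \<Rightarrow> bool" where
  "real_analytic_on F S \<longleftrightarrow>
     (\<forall>x0\<in>S. \<exists>r>0. \<exists>a::nat \<Rightarrow> real.
        \<forall>x. \<bar>x - x0\<bar> < r \<longrightarrow> (\<lambda>n. a n * (x - x0) ^ n) sums F x)"

definition real_analytic2_on :: "(real \<Rightarrow> real \<Rightarrow> real) \<Rightarrow> (real \<times> real) set \<Rightarrow> bool" where
  "real_analytic2_on F S \<longleftrightarrow>
     (\<forall>(x0, e0)\<in>S. \<exists>r>0. \<exists>a::nat \<Rightarrow> nat \<Rightarrow> real.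
        \<forall>x e. \<bar>x - x0\<bar> < r \<longrightarrow> \<bar>e - e0\<bar> < r \<longrightarrow>
          ((\<lambda>(i, j). a i j * (x - x0) ^ i * (e - e0) ^ j) has_sum F x e) UNIV)"

definition stdmap :: "real \<Rightarrow> (real \<Rightarrow> real) \<Rightarrow> real \<Rightarrow> real \<Rightarrow> real \<times> real \<Rightarrow> real \<times> real" where
  "stdmap \<mu> f \<epsilon> \<delta> = (\<lambda>(x, y). let g = - \<delta> - \<epsilon> * f x in (x + y + \<mu> + g, y + g))"

text \<open>T^n(x0,y0) = (x0 + n mu + nR, y0 + nS).\<close>
definition iterR :: "nat \<Rightarrow> real \<Rightarrow> (real \<Rightarrow> real) \<Rightarrow> real \<Rightarrow> real \<Rightarrow> real \<Rightarrow> real \<Rightarrow> real" where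
  "iterR n \<mu> f x0 y0 \<epsilon> \<delta> = fst ((stdmap \<mu> f \<epsilon> \<delta> ^^ n) (x0, y0)) - x0 - real n * \<mu>"

definition iterS :: "nat \<Rightarrow> real \<Rightarrow> (real \<Rightarrow> real) \<Rightarrow> real \<Rightarrow> real \<Rightarrow> real \<Rightarrow> real \<Rightarrow> real" where
  "iterS n \<mu> f x0 y0 \<epsilon> \<delta> = snd ((stdmap \<mu> f \<epsilon> \<delta> ^^ n) (x0, y0)) - y0"

definition admissible ::
  "nat \<Rightarrow> real \<Rightarrow> (real \<Rightarrow> real) \<Rightarrow> real \<Rightarrow> real \<Rightarrow> (real \<Rightarrow> real \<Rightarrow> real) \<Rightarrow> (real \<Rightarrow> real \<Rightarrow> real) \<Rightarrow> bool" where
  "admissible q \<mu> f eb eta Delta Y \<longleftrightarrow>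
     (\<forall>x. f (x + 2 * pi) = f x) \<and> real_analytic_on f UNIV \<and>
     eb > 0 \<and> eta > 0 \<and>
     real_analytic2_on Delta (UNIV \<times> {-eb<..<eb}) \<and>
     real_analytic2_on Y (UNIV \<times> {-eb<..<eb}) \<and>
     (\<forall>x. Delta x 0 = 0 \<and> Y x 0 = 0) \<and>
     (\<forall>x \<epsilon>. \<bar>\<epsilon>\<bar> < eb \<longrightarrow>
        \<bar>Delta x \<epsilon>\<bar> < eta \<and> \<bar>Y x \<epsilon>\<bar> < eta \<and>
        (\<forall>\<delta> y. \<bar>\<delta>\<bar> < eta \<longrightarrow> \<bar>y\<bar> < eta \<longrightarrow>
           ((iterR q \<mu> f x y \<epsilon> \<delta> = 0 \<and> iterS q \<mu> f x y \<epsilon> \<delta> = 0) \<longleftrightarrow>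
            (\<delta> = Delta x \<epsilon> \<and> y = Y x \<epsilon>))))"

definition eps_expansion :: "(real \<Rightarrow> real \<Rightarrow> real) \<Rightarrow> (nat \<Rightarrow> real \<Rightarrow> real) \<Rightarrow> bool" where
  "eps_expansion F D \<longleftrightarrow>
     (\<forall>x. \<exists>r>0. \<forall>\<epsilon>. \<bar>\<epsilon>\<bar> < r \<longrightarrow> (\<lambda>n. D n x * \<epsilon> ^ n) sums F x \<epsilon>)"

text \<open>Value of the polynomial with monomial set M (exponent vectors indexed by (k,l))
  and coefficients c, evaluated at the quantities f^(l)(x + k mu), 0 <= k < q, 0 <= l < m.\<close>
definition deriv_poly_val ::
  "nat \<Rightarrow> nat \<Rightarrow> (nat \<times> nat \<Rightarrow> nat) set \<Rightarrow> ((nat \<times> nat \<Rightarrow> nat) \<Rightarrow> real) \<Rightarrow>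
   real \<Rightarrow> (real \<Rightarrow> real) \<Rightarrow> real \<Rightarrow> real" where
  "deriv_poly_val q m M c \<mu> f x =
     (\<Sum>\<alpha>\<in>M. c \<alpha> * (\<Prod>(k, l)\<in>{0..<q} \<times> {0..<m}. ((deriv ^^ l) f (x + real k * \<mu>)) ^ \<alpha> (k, l)))"

definition poly_deg_le :: "nat \<Rightarrow> nat \<Rightarrow> (nat \<times> nat \<Rightarrow> nat) set \<Rightarrow> nat \<Rightarrow> bool" where
  "poly_deg_le q m M n \<longleftrightarrow> finite M \<and> (\<forall>\<alpha>\<in>M. (\<Sum>kl\<in>{0..<q} \<times> {0..<m}. \<alpha> kl) \<le> n)"

definition fbar :: "nat \<Rightarrow> real \<Rightarrow> (real \<Rightarrow> real) \<Rightarrow> real \<Rightarrow> real" where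
  "fbar q \<mu> f x = (1 / real q) * (\<Sum>k<q. f (x + real k * \<mu>))"

definition fbarbar :: "nat \<Rightarrow> real \<Rightarrow> (real \<Rightarrow> real) \<Rightarrow> real \<Rightarrow> real" where
  "fbarbar q \<mu> f x = (1 / real q) * (\<Sum>k<q. (real q - real k) * f (x + real k * \<mu>))"

end

theory Submission
  imports Defs "HOL-Complex_Analysis.Laurent_Convergence"
begin

text \<open>Iterate the map from $(x, Y(x,\varepsilon))$ with $\delta = \Delta(x,\varepsilon)$ and write the
  displacements $_jR$, $_jS$ as $\varepsilon$-series $R_j$, $S_j$. They satisfy formally
  $S_{j+1} = S_j - \Delta - \varepsilon f(x + j\mu + R_j)$ and $R_{j+1} = R_j + Y + S_{j+1}$, so
  the $n$-th coefficients of $R_j$ and $S_j$ are explicit linear combinations of $\Delta_n$, $Y_n$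
  and the $(n-1)$-st coefficients of $f(x + k\mu + R_k)$, $k < j$. Periodicity, $R_q = S_q = 0$,
  solves for $\Delta_n$ and $Y_n$. By Taylor expansion, the $m$-th coefficient of
  $f(x + k\mu + R_k)$ is $\sum_{i \le m} f^{(i)}(x + k\mu)/i!$ times the $m$-th coefficient of
  $R_k^i$, so induction on $n$ shows that all $n$-th coefficients are polynomials of degree at
  most $n$ in the $f^{(l)}(x + k\mu)$, $l < n$; for $n = 1$ only the values $f(x + k\mu)$ occur.\<close>

section \<open>Real power series expansions\<close>

theorem fps_nth_conv_deriv_real:
  fixes F :: "real fps"
  assumes "fps_conv_radius F > 0"
  shows "fps_nth F n = (deriv ^^ n) (eval_fps F) 0 / fact n"
  using assms
proof (induction n arbitrary: F)
  case 0
  thus ?case by (simp add: eval_fps_def)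
next
  case (Suc n F)
  have "(deriv ^^ Suc n) (eval_fps F) 0 = (deriv ^^ n) (deriv (eval_fps F)) 0"
    unfolding funpow_Suc_right o_def ..
  also have "eventually (\<lambda>z::real. z \<in> eball 0 (fps_conv_radius F)) (nhds 0)"
    using Suc.prems by (intro eventually_nhds_in_open) (auto simp: zero_ereal_def)
  hence "eventually (\<lambda>z. deriv (eval_fps F) z = eval_fps (fps_deriv F) z) (nhds 0)"
    by eventually_elim (simp add: eval_fps_deriv)
  hence "(deriv ^^ n) (deriv (eval_fps F)) 0 = (deriv ^^ n) (eval_fps (fps_deriv F)) 0"
    by (intro higher_deriv_cong_ev refl)
  also have "\<dots> / fact n = fps_nth (fps_deriv F) n"
    using Suc.prems fps_conv_radius_deriv[of F] by (intro Suc.IH [symmetric]) auto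
  also have "\<dots> / of_nat (Suc n) = fps_nth F (Suc n)"
    by (simp add: fps_deriv_def del: of_nat_Suc)
  finally show ?case by (simp add: field_split_simps)
qed

lemma fps_nth_fps_expansion_real:
  fixes f :: "real \<Rightarrow> real"
  assumes "f has_fps_expansion F"
  shows "fps_nth F n = (deriv ^^ n) f 0 / fact n"
proof -
  have "fps_nth F n = (deriv ^^ n) (eval_fps F) 0 / fact n"
    using assms by (intro fps_nth_conv_deriv_real) (auto simp: has_fps_expansion_def)
  also have "(deriv ^^ n) (eval_fps F) 0 = (deriv ^^ n) f 0"
    using assms by (intro higher_deriv_cong_ev) (auto simp: has_fps_expansion_def)
  finally show ?thesis .
qed

lemma has_fps_expansion_unique_real:
  fixes f :: "real \<Rightarrow> real"
  assumes "f has_fps_expansion F" "f has_fps_expansion G"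
  shows "F = G"
  by (rule fps_ext) (simp add: fps_nth_fps_expansion_real[OF assms(1)] fps_nth_fps_expansion_real[OF assms(2)])

definition fps_of_real :: "real fps \<Rightarrow> complex fps" where
  "fps_of_real F = Abs_fps (\<lambda>n. complex_of_real (fps_nth F n))"

lemma fps_of_real_nth [simp]: "fps_nth (fps_of_real F) n = complex_of_real (fps_nth F n)"
  by (simp add: fps_of_real_def)

lemma fps_of_real_mult: "fps_of_real (F * G) = fps_of_real F * fps_of_real G"
  by (rule fps_ext) (simp add: fps_mult_nth)

lemma fps_of_real_power: "fps_of_real (F ^ i) = fps_of_real F ^ i"
proof (induction i)
  case 0
  show ?case by (rule fps_ext) simp
qed (simp add: fps_of_real_mult)

lemma fps_of_real_compose: "fps_of_real (F oo G) = fps_of_real F oo fps_of_real G"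
  by (rule fps_ext) (simp add: fps_compose_nth fps_of_real_power [symmetric])

lemma fps_conv_radius_of_real [simp]: "fps_conv_radius (fps_of_real F) = fps_conv_radius F"
  unfolding fps_conv_radius_def by (rule conv_radius_cong) simp

lemma eval_fps_of_real:
  assumes "ereal \<bar>t\<bar> < fps_conv_radius F"
  shows "eval_fps (fps_of_real F) (complex_of_real t) = complex_of_real (eval_fps F t)"
proof -
  have "summable (\<lambda>n. fps_nth F n * t ^ n)"
    using assms by (intro summable_in_conv_radius) (simp add: fps_conv_radius_def)
  hence "(\<lambda>n. fps_nth F n * t ^ n) sums eval_fps F t"
    by (simp add: eval_fps_def summable_sums)
  hence "(\<lambda>n. complex_of_real (fps_nth F n * t ^ n)) sums complex_of_real (eval_fps F t)"
    by (subst sums_of_real_iff)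
  thus ?thesis by (simp add: eval_fps_def sums_iff)
qed

lemma eventually_within_fps_conv_radius:
  assumes "fps_conv_radius (F :: real fps) > 0"
  shows "eventually (\<lambda>t. ereal \<bar>t\<bar> < fps_conv_radius F) (nhds 0)"
proof -
  have "eventually (\<lambda>t::real. t \<in> eball 0 (fps_conv_radius F)) (nhds 0)"
    using assms by (intro eventually_nhds_in_open) (auto simp: zero_ereal_def)
  thus ?thesis by eventually_elim (simp add: dist_real_def)
qed

text \<open>The library composition theorem is complex-analytic; a real expansion is transferred
  through the complexified series, whose values on the real axis are the real values.\<close>
lemma has_fps_expansion_compose_real:
  fixes f g :: "real \<Rightarrow> real"
  assumes F: "f has_fps_expansion F" and G: "g has_fps_expansion G" "fps_nth G 0 = 0"
  shows "(\<lambda>t. f (g t)) has_fps_expansion (F oo G)"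
proof -
  define fc where "fc = eval_fps (fps_of_real F)"
  define gc where "gc = eval_fps (fps_of_real G)"
  have rF: "fps_conv_radius F > 0" "eventually (\<lambda>z. eval_fps F z = f z) (nhds 0)"
    and rG: "fps_conv_radius G > 0" "eventually (\<lambda>z. eval_fps G z = g z) (nhds 0)"
    using F G by (auto simp: has_fps_expansion_def)
  have "(fc \<circ> gc) has_fps_expansion fps_of_real (F oo G)"
    unfolding fc_def gc_def fps_of_real_compose
    by (intro has_fps_expansion_compose eval_fps_has_fps_expansion) (simp_all add: rF rG G)
  hence rad: "fps_conv_radius (F oo G) > 0"
    and "eventually (\<lambda>z. eval_fps (fps_of_real (F oo G)) z = fc (gc z)) (nhds 0)"
    by (auto simp: has_fps_expansion_def)
  moreover have "filterlim complex_of_real (nhds 0) (nhds (0::real))"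
    using tendsto_of_real[OF filterlim_ident[of "nhds (0::real)"], where 'a=complex] by simp
  ultimately have ev_complex:
    "eventually (\<lambda>t. eval_fps (fps_of_real (F oo G)) (of_real t) = fc (gc (of_real t))) (nhds 0)"
    using eventually_compose_filterlim by blast
  have "(g \<longlongrightarrow> g 0) (at 0)"
    using has_fps_expansion_imp_continuous[OF G(1), of UNIV] by (simp add: isCont_def)
  hence "filterlim g (nhds 0) (nhds 0)"
    using has_fps_expansion_imp_0_eq_fps_nth_0[OF G(1)] G(2) by (simp add: tendsto_nhds_iff)
  moreover have "eventually (\<lambda>s. ereal \<bar>s\<bar> < fps_conv_radius F \<and> eval_fps F s = f s) (nhds 0)"
    using eventually_within_fps_conv_radius[OF rF(1)] rF(2) by eventually_elim auto
  ultimately have ev_f: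
    "eventually (\<lambda>t. ereal \<bar>g t\<bar> < fps_conv_radius F \<and> eval_fps F (g t) = f (g t)) (nhds 0)"
    using eventually_compose_filterlim by blast
  have "eventually (\<lambda>t. eval_fps (F oo G) t = f (g t)) (nhds 0)"
    using ev_complex eventually_within_fps_conv_radius[OF rad]
      eventually_within_fps_conv_radius[OF rG(1)] rG(2) ev_f
  proof eventually_elim
    case (elim t)
    have "complex_of_real (eval_fps (F oo G) t) = fc (gc (of_real t))"
      using elim by (simp add: eval_fps_of_real)
    also have "\<dots> = of_real (f (g t))"
      using elim by (simp add: fc_def gc_def eval_fps_of_real)
    finally show ?case by simp
  qed
  thus ?thesis using rad by (simp add: has_fps_expansion_def)
qed

lemma has_fps_expansion_sums_real:
  fixes h :: "real \<Rightarrow> real"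
  assumes "r > 0" "\<And>s. \<bar>s\<bar> < r \<Longrightarrow> (\<lambda>n. c n * s ^ n) sums h s"
  shows "h has_fps_expansion Abs_fps c"
proof (rule has_fps_expansionI)
  have "eventually (\<lambda>s::real. dist s 0 < r) (nhds 0)"
    using assms(1) eventually_nhds_metric by blast
  thus "eventually (\<lambda>s. (\<lambda>n. fps_nth (Abs_fps c) n * s ^ n) sums h s) (nhds 0)"
    by eventually_elim (simp add: assms(2) dist_real_def)
qed

lemma eps_expansion_has_fps_expansion:
  assumes "eps_expansion F D"
  shows "F x has_fps_expansion Abs_fps (\<lambda>n. D n x)"
  using assms unfolding eps_expansion_def by (metis has_fps_expansion_sums_real)

lemma higher_deriv_shift_real:
  fixes f :: "real \<Rightarrow> real"
  shows "(deriv ^^ n) (\<lambda>s. f (a + s)) = (\<lambda>s. (deriv ^^ n) f (a + s))"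
proof (induction n)
  case (Suc n)
  have "deriv (\<lambda>s. h (a + s)) s = deriv h (a + s)" for h :: "real \<Rightarrow> real" and s
    unfolding deriv_def using DERIV_shift[of h _ s a] by (simp add: add.commute)
  thus ?case by (simp add: Suc)
qed simp

definition taylor_fps :: "(real \<Rightarrow> real) \<Rightarrow> real \<Rightarrow> real fps" where
  "taylor_fps f a = Abs_fps (\<lambda>l. (deriv ^^ l) f a / fact l)"

lemma real_analytic_has_taylor_expansion:
  assumes "real_analytic_on f UNIV"
  shows "(\<lambda>s. f (a + s)) has_fps_expansion taylor_fps f a"
proof -
  obtain r c where r: "r > 0" "\<forall>x. \<bar>x - a\<bar> < r \<longrightarrow> (\<lambda>n. c n * (x - a) ^ n) sums f x"
    using assms unfolding real_analytic_on_def by blast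
  have H: "(\<lambda>s. f (a + s)) has_fps_expansion Abs_fps c"
    using r(2)[rule_format, of "a + _"] by (intro has_fps_expansion_sums_real[OF r(1)]) simp
  have "c = (\<lambda>l. (deriv ^^ l) f a / fact l)"
    using fps_nth_fps_expansion_real[OF H] by (simp add: higher_deriv_shift_real fun_eq_iff)
  thus ?thesis using H by (simp add: taylor_fps_def)
qed

section \<open>The formal orbit\<close>

fun formal_orbit ::
  "real \<Rightarrow> (real \<Rightarrow> real) \<Rightarrow> real \<Rightarrow> real fps \<Rightarrow> real fps \<Rightarrow> nat \<Rightarrow> real fps \<times> real fps" where
  "formal_orbit \<mu> f x A B 0 = (0, 0)"
| "formal_orbit \<mu> f x A B (Suc j) =
     (let (R, S) = formal_orbit \<mu> f x A B j;
          S' = S - A - fps_X * (taylor_fps f (x + real j * \<mu>) oo R)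
      in (R + B + S', S'))"

definition forcing_fps :: "real \<Rightarrow> (real \<Rightarrow> real) \<Rightarrow> real \<Rightarrow> real fps \<Rightarrow> real fps \<Rightarrow> nat \<Rightarrow> real fps" where
  "forcing_fps \<mu> f x A B k = taylor_fps f (x + real k * \<mu>) oo fst (formal_orbit \<mu> f x A B k)"

lemma formal_orbit_nth:
  "fps_nth (fst (formal_orbit \<mu> f x A B j)) n =
     real j * fps_nth B n - real j * (real j + 1) / 2 * fps_nth A n
     - (if n = 0 then 0 else \<Sum>k<j. (real j - real k) * fps_nth (forcing_fps \<mu> f x A B k) (n - 1)) \<and>
   fps_nth (snd (formal_orbit \<mu> f x A B j)) n =
     - real j * fps_nth A n - (if n = 0 then 0 else \<Sum>k<j. fps_nth (forcing_fps \<mu> f x A B k) (n - 1))"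
proof (induction j)
  case (Suc j)
  let ?G = "\<lambda>k. fps_nth (forcing_fps \<mu> f x A B k) (n - 1)"
  have step: "formal_orbit \<mu> f x A B (Suc j) =
      (fst (formal_orbit \<mu> f x A B j) + B + (snd (formal_orbit \<mu> f x A B j) - A - fps_X * forcing_fps \<mu> f x A B j),
       snd (formal_orbit \<mu> f x A B j) - A - fps_X * forcing_fps \<mu> f x A B j)"
    by (simp add: forcing_fps_def case_prod_beta Let_def)
  have "(\<Sum>k<Suc j. (real (Suc j) - real k) * ?G k) = (\<Sum>k<j. (real j - real k) * ?G k) + (\<Sum>k<Suc j. ?G k)"
    by (simp add: sum.distrib[symmetric] algebra_simps)
  thus ?case unfolding step using Suc by (auto simp: algebra_simps add_divide_distrib)
qed simp_all

lemma formal_periodic_orbit_coeffs: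
  assumes "q \<ge> 1" "formal_orbit \<mu> f x A B q = (0, 0)"
  shows "fps_nth A 0 = 0" "fps_nth B 0 = 0"
    "fps_nth A (Suc m) = - (\<Sum>k<q. fps_nth (forcing_fps \<mu> f x A B k) m) / real q"
    "fps_nth B (Suc m) = (real q + 1) / 2 * fps_nth A (Suc m)
       + (\<Sum>k<q. (real q - real k) * fps_nth (forcing_fps \<mu> f x A B k) m) / real q"
proof -
  have q: "real q > 0" using assms(1) by simp
  note closed = formal_orbit_nth[of \<mu> f x A B q, unfolded assms(2), simplified]
  show A0: "fps_nth A 0 = 0"
    using closed[of 0] q by simp
  show "fps_nth B 0 = 0"
    using closed[of 0] q A0 by simp
  show "fps_nth A (Suc m) = - (\<Sum>k<q. fps_nth (forcing_fps \<mu> f x A B k) m) / real q"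
    using closed[of "Suc m"] q by (simp add: field_simps)
  show "fps_nth B (Suc m) = (real q + 1) / 2 * fps_nth A (Suc m)
       + (\<Sum>k<q. (real q - real k) * fps_nth (forcing_fps \<mu> f x A B k) m) / real q"
    using closed[of "Suc m"] q by (simp add: field_simps)
qed

lemma iter_Suc:
  "iterS (Suc j) \<mu> f x y \<epsilon> \<delta> =
     iterS j \<mu> f x y \<epsilon> \<delta> - \<delta> - \<epsilon> * f (x + real j * \<mu> + iterR j \<mu> f x y \<epsilon> \<delta>)"
  "iterR (Suc j) \<mu> f x y \<epsilon> \<delta> = iterR j \<mu> f x y \<epsilon> \<delta> + y + iterS (Suc j) \<mu> f x y \<epsilon> \<delta>"
  by (cases "(stdmap \<mu> f \<epsilon> \<delta> ^^ j) (x, y)"; simp add: iterR_def iterS_def stdmap_def algebra_simps)+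

lemma formal_orbit_has_fps_expansion:
  assumes f: "real_analytic_on f UNIV"
    and A: "\<delta> has_fps_expansion A" "fps_nth A 0 = 0"
    and B: "y has_fps_expansion B" "fps_nth B 0 = 0"
  shows "(\<lambda>t. iterR j \<mu> f x (y t) t (\<delta> t)) has_fps_expansion fst (formal_orbit \<mu> f x A B j) \<and>
         (\<lambda>t. iterS j \<mu> f x (y t) t (\<delta> t)) has_fps_expansion snd (formal_orbit \<mu> f x A B j)"
proof (induction j)
  case 0
  show ?case by (simp add: iterR_def iterS_def)
next
  case (Suc j)
  define R where "R = fst (formal_orbit \<mu> f x A B j)"
  define S where "S = snd (formal_orbit \<mu> f x A B j)"
  define S' where "S' = S - A - fps_X * (taylor_fps f (x + real j * \<mu>) oo R)"
  have IH: "(\<lambda>t. iterR j \<mu> f x (y t) t (\<delta> t)) has_fps_expansion R"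
    "(\<lambda>t. iterS j \<mu> f x (y t) t (\<delta> t)) has_fps_expansion S"
    using Suc by (simp_all add: R_def S_def)
  have "fps_nth R 0 = 0"
    using A(2) B(2) by (simp add: R_def formal_orbit_nth)
  hence comp: "(\<lambda>t. f (x + real j * \<mu> + iterR j \<mu> f x (y t) t (\<delta> t)))
           has_fps_expansion (taylor_fps f (x + real j * \<mu>) oo R)"
    using has_fps_expansion_compose_real[OF real_analytic_has_taylor_expansion[OF f] IH(1)] by simp
  have S': "(\<lambda>t. iterS (Suc j) \<mu> f x (y t) t (\<delta> t)) has_fps_expansion S'"
    unfolding iter_Suc(1) S'_def
    by (intro has_fps_expansion_diff has_fps_expansion_mult IH A(1) has_fps_expansion_fps_X comp)
  have "(\<lambda>t. iterR (Suc j) \<mu> f x (y t) t (\<delta> t)) has_fps_expansion R + B + S'"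
    unfolding iter_Suc(2) by (intro has_fps_expansion_add IH B(1) S')
  moreover have "formal_orbit \<mu> f x A B (Suc j) = (R + B + S', S')"
    by (simp add: R_def S_def S'_def case_prod_beta Let_def)
  ultimately show ?case using S' by simp
qed

lemma admissible_formal_periodic_orbit:
  assumes adm: "admissible q \<mu> f eb eta Delta Y"
    and D: "eps_expansion Delta D" and Yc: "eps_expansion Y Yc"
  shows "formal_orbit \<mu> f x (Abs_fps (\<lambda>n. D n x)) (Abs_fps (\<lambda>n. Yc n x)) q = (0, 0)"
proof -
  define A where "A = Abs_fps (\<lambda>n. D n x)"
  define B where "B = Abs_fps (\<lambda>n. Yc n x)"
  have f: "real_analytic_on f UNIV" and "eb > 0" "Delta x 0 = 0" "Y x 0 = 0"
    using adm unfolding admissible_def by auto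
  have HA: "Delta x has_fps_expansion A" and HB: "Y x has_fps_expansion B"
    unfolding A_def B_def using D Yc by (simp_all add: eps_expansion_has_fps_expansion)
  have "fps_nth A 0 = 0" "fps_nth B 0 = 0"
    using has_fps_expansion_imp_0_eq_fps_nth_0[OF HA] has_fps_expansion_imp_0_eq_fps_nth_0[OF HB]
      \<open>Delta x 0 = 0\<close> \<open>Y x 0 = 0\<close> by simp_all
  note orbit = formal_orbit_has_fps_expansion[OF f HA this(1) HB this(2), of q \<mu> x]
  have "eventually (\<lambda>t::real. dist t 0 < eb) (nhds 0)"
    using \<open>eb > 0\<close> eventually_nhds_metric by blast
  hence "eventually (\<lambda>t. iterR q \<mu> f x (Y x t) t (Delta x t) = 0 \<and>
                        iterS q \<mu> f x (Y x t) t (Delta x t) = 0) (nhds 0)"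
    by eventually_elim (use adm in \<open>simp add: admissible_def dist_real_def\<close>)
  hence "(\<lambda>t. iterR q \<mu> f x (Y x t) t (Delta x t)) has_fps_expansion 0"
    "(\<lambda>t. iterS q \<mu> f x (Y x t) t (Delta x t)) has_fps_expansion 0"
    by (auto simp: has_fps_expansion_0_iff elim: eventually_mono)
  with orbit show ?thesis
    unfolding A_def[symmetric] B_def[symmetric] by (metis has_fps_expansion_unique_real prod.collapse)
qed

section \<open>Polynomials in the jet of $f$ along the orbit\<close>

definition monomial_val :: "nat \<Rightarrow> nat \<Rightarrow> (nat \<times> nat \<Rightarrow> nat) \<Rightarrow> (nat \<times> nat \<Rightarrow> real) \<Rightarrow> real" where
  "monomial_val q N \<alpha> v = (\<Prod>kl\<in>{0..<q} \<times> {0..<N}. v kl ^ \<alpha> kl)"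

definition poly_val ::
  "nat \<Rightarrow> nat \<Rightarrow> (nat \<times> nat \<Rightarrow> nat) set \<Rightarrow> ((nat \<times> nat \<Rightarrow> nat) \<Rightarrow> real) \<Rightarrow> (nat \<times> nat \<Rightarrow> real) \<Rightarrow> real"
  where "poly_val q N M c v = (\<Sum>\<alpha>\<in>M. c \<alpha> * monomial_val q N \<alpha> v)"

definition poly_fun :: "nat \<Rightarrow> nat \<Rightarrow> nat \<Rightarrow> ((nat \<times> nat \<Rightarrow> real) \<Rightarrow> real) \<Rightarrow> bool" where
  "poly_fun q N d P \<longleftrightarrow> (\<exists>M c. poly_deg_le q N M d \<and> (\<forall>v. P v = poly_val q N M c v))"

lemma poly_fun_const: "poly_fun q N d (\<lambda>v. a)"
proof -
  have "poly_deg_le q N {\<lambda>_. 0} d" "\<forall>v. a = poly_val q N {\<lambda>_. 0} (\<lambda>_. a) v"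
    by (simp_all add: poly_deg_le_def poly_val_def monomial_val_def)
  thus ?thesis unfolding poly_fun_def by blast
qed

lemma poly_fun_var:
  assumes "k < q" "l < N"
  shows "poly_fun q N 1 (\<lambda>v. v (k, l))"
proof -
  define \<alpha> where "\<alpha> = (\<lambda>kl. if kl = (k, l) then 1 else (0::nat))"
  have box: "(k, l) \<in> {0..<q} \<times> {0..<N}" using assms by auto
  have "poly_deg_le q N {\<alpha>} 1"
    using box by (simp add: poly_deg_le_def \<alpha>_def sum.delta)
  moreover have "v (k, l) = poly_val q N {\<alpha>} (\<lambda>_. 1) v" for v
  proof -
    have "monomial_val q N \<alpha> v = (\<Prod>kl\<in>{0..<q} \<times> {0..<N}. if kl = (k, l) then v kl else 1)"
      unfolding monomial_val_def \<alpha>_def by (rule prod.cong) auto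
    thus ?thesis using box by (simp add: poly_val_def prod.delta)
  qed
  ultimately show ?thesis unfolding poly_fun_def by blast
qed

lemma poly_fun_add:
  assumes "poly_fun q N d P" "poly_fun q N d Q"
  shows "poly_fun q N d (\<lambda>v. P v + Q v)"
proof -
  obtain M1 c1 M2 c2 where 1: "poly_deg_le q N M1 d" "\<forall>v. P v = poly_val q N M1 c1 v"
    and 2: "poly_deg_le q N M2 d" "\<forall>v. Q v = poly_val q N M2 c2 v"
    using assms unfolding poly_fun_def by blast
  define c where "c = (\<lambda>\<alpha>. (if \<alpha> \<in> M1 then c1 \<alpha> else 0) + (if \<alpha> \<in> M2 then c2 \<alpha> else 0))"
  have fin: "finite M1" "finite M2" using 1 2 by (auto simp: poly_deg_le_def)
  have "poly_deg_le q N (M1 \<union> M2) d" using 1 2 by (auto simp: poly_deg_le_def)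
  moreover have "P v + Q v = poly_val q N (M1 \<union> M2) c v" for v
  proof -
    have "poly_val q N (M1 \<union> M2) c v =
        (\<Sum>\<alpha>\<in>M1 \<union> M2. if \<alpha> \<in> M1 then c1 \<alpha> * monomial_val q N \<alpha> v else 0)
      + (\<Sum>\<alpha>\<in>M1 \<union> M2. if \<alpha> \<in> M2 then c2 \<alpha> * monomial_val q N \<alpha> v else 0)"
      unfolding poly_val_def c_def sum.distrib[symmetric] by (rule sum.cong) (auto simp: algebra_simps)
    also have "\<dots> = poly_val q N M1 c1 v + poly_val q N M2 c2 v"
      using fin by (simp add: poly_val_def sum.If_cases Int_absorb1 Int_absorb2)
    finally show ?thesis using 1 2 by simp
  qed
  ultimately show ?thesis unfolding poly_fun_def by blast
qed

lemma monomial_val_add: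
  "monomial_val q N (\<lambda>kl. \<alpha> kl + \<beta> kl) v = monomial_val q N \<alpha> v * monomial_val q N \<beta> v"
  unfolding monomial_val_def by (simp add: power_add prod.distrib)

lemma poly_fun_mult:
  assumes "poly_fun q N d1 P" "poly_fun q N d2 Q"
  shows "poly_fun q N (d1 + d2) (\<lambda>v. P v * Q v)"
proof -
  obtain M1 c1 M2 c2 where 1: "poly_deg_le q N M1 d1" "\<forall>v. P v = poly_val q N M1 c1 v"
    and 2: "poly_deg_le q N M2 d2" "\<forall>v. Q v = poly_val q N M2 c2 v"
    using assms unfolding poly_fun_def by blast
  have fin: "finite M1" "finite M2" using 1 2 by (auto simp: poly_deg_le_def)
  define plus :: "(nat \<times> nat \<Rightarrow> nat) \<times> (nat \<times> nat \<Rightarrow> nat) \<Rightarrow> nat \<times> nat \<Rightarrow> nat"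
    where "plus = (\<lambda>(\<alpha>, \<beta>) kl. \<alpha> kl + \<beta> kl)"
  define M where "M = plus ` (M1 \<times> M2)"
  define c where "c = (\<lambda>\<gamma>. \<Sum>(\<alpha>, \<beta>)\<in>{p \<in> M1 \<times> M2. plus p = \<gamma>}. c1 \<alpha> * c2 \<beta>)"
  have "(\<Sum>kl\<in>{0..<q} \<times> {0..<N}. plus (\<alpha>, \<beta>) kl) \<le> d1 + d2" if "\<alpha> \<in> M1" "\<beta> \<in> M2" for \<alpha> \<beta>
    using that 1 2 by (simp add: plus_def sum.distrib add_mono poly_deg_le_def)
  hence "poly_deg_le q N M (d1 + d2)"
    using fin by (auto simp: poly_deg_le_def M_def)
  moreover have "P v * Q v = poly_val q N M c v" for v
  proof -
    have "P v * Q v = (\<Sum>(\<alpha>, \<beta>)\<in>M1 \<times> M2. c1 \<alpha> * c2 \<beta> * monomial_val q N (plus (\<alpha>, \<beta>)) v)"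
      using 1 2 by (simp add: poly_val_def sum_product sum.cartesian_product plus_def
          monomial_val_add algebra_simps)
    also have "\<dots> = (\<Sum>\<gamma>\<in>M. \<Sum>(\<alpha>, \<beta>)\<in>{p \<in> M1 \<times> M2. plus p = \<gamma>}. c1 \<alpha> * c2 \<beta> * monomial_val q N (plus (\<alpha>, \<beta>)) v)"
      unfolding M_def using fin by (intro sum.image_gen) auto
    also have "\<dots> = poly_val q N M c v"
      unfolding poly_val_def c_def sum_distrib_right by (intro sum.cong refl) auto
    finally show ?thesis .
  qed
  ultimately show ?thesis unfolding poly_fun_def by blast
qed

lemma poly_fun_cmult: "poly_fun q N d P \<Longrightarrow> poly_fun q N d (\<lambda>v. a * P v)"
  using poly_fun_mult[OF poly_fun_const[of q N 0 a]] by simp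

definition jet :: "real \<Rightarrow> (real \<Rightarrow> real) \<Rightarrow> real \<Rightarrow> nat \<times> nat \<Rightarrow> real" where
  "jet \<mu> f x = (\<lambda>(k, l). (deriv ^^ l) f (x + real k * \<mu>))"

lemma deriv_poly_val_eq: "deriv_poly_val q N M c \<mu> f x = poly_val q N M c (jet \<mu> f x)"
  unfolding poly_val_def monomial_val_def jet_def deriv_poly_val_def
  by (intro sum.cong refl arg_cong2[where f="(*)"] prod.cong) auto

definition jet_poly ::
  "nat \<Rightarrow> real \<Rightarrow> nat \<Rightarrow> nat \<Rightarrow> ((real \<Rightarrow> real) \<Rightarrow> real \<Rightarrow> real fps \<Rightarrow> real fps \<Rightarrow> real) \<Rightarrow> bool" where
  "jet_poly q \<mu> N d h \<longleftrightarrow> (\<exists>P. poly_fun q N d P \<and>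
     (\<forall>f x A B. formal_orbit \<mu> f x A B q = (0, 0) \<longrightarrow> h f x A B = P (jet \<mu> f x)))"

lemma jet_poly_cong:
  "jet_poly q \<mu> N d h \<Longrightarrow>
   (\<And>f x A B. formal_orbit \<mu> f x A B q = (0, 0) \<Longrightarrow> h f x A B = h' f x A B) \<Longrightarrow>
   jet_poly q \<mu> N d h'"
  unfolding jet_poly_def by metis

lemma jet_poly_const: "jet_poly q \<mu> N d (\<lambda>f x A B. a)"
  unfolding jet_poly_def using poly_fun_const by fastforce

lemma jet_poly_add:
  assumes "jet_poly q \<mu> N d h" "jet_poly q \<mu> N d h'"
  shows "jet_poly q \<mu> N d (\<lambda>f x A B. h f x A B + h' f x A B)"
proof -
  obtain P P' where "poly_fun q N d P" "poly_fun q N d P'"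
    "\<forall>f x A B. formal_orbit \<mu> f x A B q = (0, 0) \<longrightarrow> h f x A B = P (jet \<mu> f x) \<and> h' f x A B = P' (jet \<mu> f x)"
    using assms unfolding jet_poly_def by meson
  thus ?thesis unfolding jet_poly_def by (intro exI[of _ "\<lambda>v. P v + P' v"]) (simp add: poly_fun_add)
qed

lemma jet_poly_mult:
  assumes "jet_poly q \<mu> N d h" "jet_poly q \<mu> N d' h'"
  shows "jet_poly q \<mu> N (d + d') (\<lambda>f x A B. h f x A B * h' f x A B)"
proof -
  obtain P P' where "poly_fun q N d P" "poly_fun q N d' P'"
    "\<forall>f x A B. formal_orbit \<mu> f x A B q = (0, 0) \<longrightarrow> h f x A B = P (jet \<mu> f x) \<and> h' f x A B = P' (jet \<mu> f x)"
    using assms unfolding jet_poly_def by meson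
  thus ?thesis unfolding jet_poly_def by (intro exI[of _ "\<lambda>v. P v * P' v"]) (simp add: poly_fun_mult)
qed

lemma jet_poly_cmult: "jet_poly q \<mu> N d h \<Longrightarrow> jet_poly q \<mu> N d (\<lambda>f x A B. a * h f x A B)"
  using jet_poly_mult[OF jet_poly_const[of q \<mu> N 0 a]] by simp

lemma jet_poly_diff:
  "jet_poly q \<mu> N d h \<Longrightarrow> jet_poly q \<mu> N d h' \<Longrightarrow> jet_poly q \<mu> N d (\<lambda>f x A B. h f x A B - h' f x A B)"
  using jet_poly_add[of q \<mu> N d h "\<lambda>f x A B. (-1) * h' f x A B"] jet_poly_cmult[of q \<mu> N d h' "-1"]
  by simp

lemma jet_poly_sum:
  assumes "finite I" "\<And>i. i \<in> I \<Longrightarrow> jet_poly q \<mu> N d (h i)"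
  shows "jet_poly q \<mu> N d (\<lambda>f x A B. \<Sum>i\<in>I. h i f x A B)"
  using assms
proof (induction I rule: finite_induct)
  case empty
  show ?case using jet_poly_const[of q \<mu> N d 0] by simp
next
  case (insert i I)
  thus ?case using jet_poly_add[of q \<mu> N d "h i" "\<lambda>f x A B. \<Sum>i\<in>I. h i f x A B"] by simp
qed

lemma jet_poly_taylor_coeff:
  assumes "k < q" "l < N"
  shows "jet_poly q \<mu> N 1 (\<lambda>f x A B. fps_nth (taylor_fps f (x + real k * \<mu>)) l)"
proof -
  have "poly_fun q N 1 (\<lambda>v. (1 / fact l) * v (k, l))"
    using assms by (intro poly_fun_cmult poly_fun_var)
  thus ?thesis unfolding jet_poly_def by (intro exI[of _ "\<lambda>v. (1 / fact l) * v (k, l)"])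
      (simp add: taylor_fps_def jet_def)
qed

text \<open>No condition on the constant term of $U$ is needed: coefficient $s$ of $U^i$ is a sum of
  products of coefficients of $U$ whose indices add up to $s$.\<close>
lemma jet_poly_power_nth:
  assumes "\<And>s. s \<le> m \<Longrightarrow> jet_poly q \<mu> N s (\<lambda>f x A B. fps_nth (U f x A B) s)" and "s \<le> m"
  shows "jet_poly q \<mu> N s (\<lambda>f x A B. fps_nth (U f x A B ^ i) s)"
  using \<open>s \<le> m\<close>
proof (induction i arbitrary: s)
  case 0
  show ?case using jet_poly_const[of q \<mu> N s "if s = 0 then 1 else 0"] by simp
next
  case (Suc i)
  have "jet_poly q \<mu> N s (\<lambda>f x A B. \<Sum>j=0..s. fps_nth (U f x A B) j * fps_nth (U f x A B ^ i) (s - j))"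
  proof (rule jet_poly_sum)
    fix j assume "j \<in> {0..s}"
    hence "jet_poly q \<mu> N (j + (s - j)) (\<lambda>f x A B. fps_nth (U f x A B) j * fps_nth (U f x A B ^ i) (s - j))"
      using Suc by (intro jet_poly_mult assms Suc.IH) auto
    thus "jet_poly q \<mu> N s (\<lambda>f x A B. fps_nth (U f x A B) j * fps_nth (U f x A B ^ i) (s - j))"
      using \<open>j \<in> {0..s}\<close> by simp
  qed simp
  thus ?case by (simp add: fps_mult_nth)
qed

lemma jet_poly_forcing_nth:
  assumes "k < q" "m < N"
    and "\<And>s. s \<le> m \<Longrightarrow> jet_poly q \<mu> N s (\<lambda>f x A B. fps_nth (fst (formal_orbit \<mu> f x A B k)) s)"
  shows "jet_poly q \<mu> N (Suc m) (\<lambda>f x A B. fps_nth (forcing_fps \<mu> f x A B k) m)"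
proof -
  have "jet_poly q \<mu> N m (\<lambda>f x A B. fps_nth (fst (formal_orbit \<mu> f x A B k) ^ i) m)" for i
    using jet_poly_power_nth[of m, OF assms(3)] by simp
  hence "jet_poly q \<mu> N (1 + m) (\<lambda>f x A B. \<Sum>i=0..m. fps_nth (taylor_fps f (x + real k * \<mu>)) i
                                    * fps_nth (fst (formal_orbit \<mu> f x A B k) ^ i) m)"
    using assms by (intro jet_poly_sum jet_poly_mult jet_poly_taylor_coeff) auto
  thus ?thesis by (simp add: forcing_fps_def fps_compose_nth)
qed

section \<open>The coefficients of $\Delta$ and $Y$\<close>

lemma jet_poly_periodic_coeffs_Suc:
  assumes "q \<ge> 1" "m < N"
    and R: "\<And>s k. s \<le> m \<Longrightarrow> k < q \<Longrightarrow>
              jet_poly q \<mu> N s (\<lambda>f x A B. fps_nth (fst (formal_orbit \<mu> f x A B k)) s)"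
  shows "jet_poly q \<mu> N (Suc m) (\<lambda>f x A B. fps_nth A (Suc m))"
    and "jet_poly q \<mu> N (Suc m) (\<lambda>f x A B. fps_nth B (Suc m))"
proof -
  have G: "jet_poly q \<mu> N (Suc m) (\<lambda>f x A B. fps_nth (forcing_fps \<mu> f x A B k) m)" if "k < q" for k
    using that assms(2) R by (intro jet_poly_forcing_nth)
  note coeffs = formal_periodic_orbit_coeffs[OF assms(1)]
  have "jet_poly q \<mu> N (Suc m)
      (\<lambda>f x A B. (-1 / real q) * (\<Sum>k<q. fps_nth (forcing_fps \<mu> f x A B k) m))"
    using G by (intro jet_poly_cmult jet_poly_sum) auto
  thus A: "jet_poly q \<mu> N (Suc m) (\<lambda>f x A B. fps_nth A (Suc m))"
    by (rule jet_poly_cong) (simp add: coeffs(3))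
  have "jet_poly q \<mu> N (Suc m) (\<lambda>f x A B. (real q + 1) / 2 * fps_nth A (Suc m)
      + (1 / real q) * (\<Sum>k<q. (real q - real k) * fps_nth (forcing_fps \<mu> f x A B k) m))"
    using A G by (intro jet_poly_add jet_poly_cmult jet_poly_sum) auto
  thus "jet_poly q \<mu> N (Suc m) (\<lambda>f x A B. fps_nth B (Suc m))"
    by (rule jet_poly_cong) (simp add: coeffs(4))
qed

lemma jet_poly_orbit_coeffs:
  assumes "q \<ge> 1"
  shows "s \<le> N \<Longrightarrow> k < q \<Longrightarrow>
           jet_poly q \<mu> N s (\<lambda>f x A B. fps_nth (fst (formal_orbit \<mu> f x A B k)) s)"
proof (induction s arbitrary: k rule: less_induct)
  case (less s)
  note closed = formal_orbit_nth[THEN conjunct1]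
  show ?case
  proof (cases s)
    case 0
    show ?thesis
      by (rule jet_poly_cong[OF jet_poly_const[of q \<mu> N s 0]])
        (simp add: 0 closed formal_periodic_orbit_coeffs[OF assms])
  next
    case (Suc m)
    have A: "jet_poly q \<mu> N (Suc m) (\<lambda>f x A B. fps_nth A (Suc m))"
      and B: "jet_poly q \<mu> N (Suc m) (\<lambda>f x A B. fps_nth B (Suc m))"
      using jet_poly_periodic_coeffs_Suc[OF assms, of m N \<mu>] less Suc by auto
    have G: "jet_poly q \<mu> N (Suc m) (\<lambda>f x A B. fps_nth (forcing_fps \<mu> f x A B j) m)" if "j < k" for j
      using that less Suc by (intro jet_poly_forcing_nth) auto
    have "jet_poly q \<mu> N (Suc m) (\<lambda>f x A B. real k * fps_nth B (Suc m)
        - real k * (real k + 1) / 2 * fps_nth A (Suc m)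
        - (\<Sum>j<k. (real k - real j) * fps_nth (forcing_fps \<mu> f x A B j) m))"
      using A B G by (intro jet_poly_diff jet_poly_cmult jet_poly_sum) auto
    thus ?thesis
      unfolding Suc by (rule jet_poly_cong) (simp add: closed)
  qed
qed

lemma periodic_coeffs_poly:
  assumes "q \<ge> 1" "n \<ge> 1"
  shows "\<exists>MD cD MY cY. poly_deg_le q n MD n \<and> poly_deg_le q n MY n \<and>
           (\<forall>f x A B. formal_orbit \<mu> f x A B q = (0, 0) \<longrightarrow>
              fps_nth A n = deriv_poly_val q n MD cD \<mu> f x \<and>
              fps_nth B n = deriv_poly_val q n MY cY \<mu> f x)"
proof -
  obtain m where n: "n = Suc m" using assms(2) by (cases n) auto
  have "jet_poly q \<mu> n n (\<lambda>f x A B. fps_nth A n)" "jet_poly q \<mu> n n (\<lambda>f x A B. fps_nth B n)"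
    using jet_poly_periodic_coeffs_Suc[OF assms(1), of m n] jet_poly_orbit_coeffs[OF assms(1)] n
    by auto
  then obtain MD cD MY cY where "poly_deg_le q n MD n" "poly_deg_le q n MY n"
    "\<forall>f x A B. formal_orbit \<mu> f x A B q = (0, 0) \<longrightarrow>
       fps_nth A n = poly_val q n MD cD (jet \<mu> f x) \<and> fps_nth B n = poly_val q n MY cY (jet \<mu> f x)"
    unfolding jet_poly_def poly_fun_def by metis
  thus ?thesis by (auto simp: deriv_poly_val_eq)
qed

lemma periodic_first_coeffs:
  assumes "q \<ge> 1" "formal_orbit \<mu> f x A B q = (0, 0)"
  shows "fps_nth A 1 = - fbar q \<mu> f x"
    and "fps_nth B 1 = - ((real q + 1) / 2) * fbar q \<mu> f x + fbarbar q \<mu> f x"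
proof -
  have "fps_nth (forcing_fps \<mu> f x A B k) 0 = f (x + real k * \<mu>)" for k
    by (simp add: forcing_fps_def taylor_fps_def)
  thus "fps_nth A 1 = - fbar q \<mu> f x"
    and "fps_nth B 1 = - ((real q + 1) / 2) * fbar q \<mu> f x + fbarbar q \<mu> f x"
    using formal_periodic_orbit_coeffs(3,4)[OF assms, of 0]
    by (simp_all add: fbar_def fbarbar_def sum_divide_distrib)
qed

theorem mainTheorem5:
  fixes p :: int and q :: nat
  assumes "q \<ge> 1"
  defines "\<mu> \<equiv> 2 * pi * real_of_int p / real q"
  shows "(\<forall>n\<ge>1. \<exists>MD cD MY cY.
            poly_deg_le q n MD n \<and> poly_deg_le q n MY n \<and>
            (\<forall>f eb eta Delta Y D Yc.
               admissible q \<mu> f eb eta Delta Y \<and> eps_expansion Delta D \<and> eps_expansion Y Yc \<longrightarrow>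
               (\<forall>x. D n x = deriv_poly_val q n MD cD \<mu> f x \<and>
                    Yc n x = deriv_poly_val q n MY cY \<mu> f x)))
       \<and> (\<forall>f eb eta Delta Y D Yc.
            admissible q \<mu> f eb eta Delta Y \<and> eps_expansion Delta D \<and> eps_expansion Y Yc \<longrightarrow>
            (\<forall>x. D 1 x = - fbar q \<mu> f x \<and>
                 Yc 1 x = - ((real q + 1) / 2) * fbar q \<mu> f x + fbarbar q \<mu> f x))"
proof (intro conjI allI impI)
  fix n :: nat assume "n \<ge> 1"
  then obtain MD cD MY cY where "poly_deg_le q n MD n" "poly_deg_le q n MY n"
    and poly: "\<And>f x A B. formal_orbit \<mu> f x A B q = (0, 0) \<Longrightarrow>
       fps_nth A n = deriv_poly_val q n MD cD \<mu> f x \<and> fps_nth B n = deriv_poly_val q n MY cY \<mu> f x"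
    using periodic_coeffs_poly[OF assms(1)] by blast
  moreover have "D n x = deriv_poly_val q n MD cD \<mu> f x \<and> Yc n x = deriv_poly_val q n MY cY \<mu> f x"
    if "admissible q \<mu> f eb eta Delta Y \<and> eps_expansion Delta D \<and> eps_expansion Y Yc"
    for f eb eta Delta Y D Yc x
    using poly[OF admissible_formal_periodic_orbit[of q \<mu> f eb eta Delta Y D Yc x]] that by simp
  ultimately show "\<exists>MD cD MY cY. poly_deg_le q n MD n \<and> poly_deg_le q n MY n \<and>
      (\<forall>f eb eta Delta Y D Yc.
         admissible q \<mu> f eb eta Delta Y \<and> eps_expansion Delta D \<and> eps_expansion Y Yc \<longrightarrow>
         (\<forall>x. D n x = deriv_poly_val q n MD cD \<mu> f x \<and> Yc n x = deriv_poly_val q n MY cY \<mu> f x))"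
    by blast
next
  fix f eb eta Delta Y D Yc x
  assume "admissible q \<mu> f eb eta Delta Y \<and> eps_expansion Delta D \<and> eps_expansion Y Yc"
  then show "D 1 x = - fbar q \<mu> f x"
    and "Yc 1 x = - ((real q + 1) / 2) * fbar q \<mu> f x + fbarbar q \<mu> f x"
    using periodic_first_coeffs[OF assms(1) admissible_formal_periodic_orbit] by auto
qed

end
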